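(* Let $q$ be a prime power and $b,k,t$ positive integers with $k>t$. Then \[ r_b^{wt_b}(k,t)\ge\frac{5q^b(t-b+2)(t-b+1)}{3(q^b-1)(t-b+3)}. \]
   Context: For $\boldsymbol{z}=(z_0,\ldots,z_{n-1}),\boldsymbol{w}\in\mathbb{F}_q^n$, $d_b(\boldsymbol{z},\boldsymbol{w})$ is the number of $i\in\{0,\ldots,n-1\}$ with $(z_i,\ldots,z_{i+b-1})\ne(w_i,\ldots,w_{i+b-1})$ (indices mod $n$), and $wt_b(\boldsymbol{x})=d_b(\boldsymbol{x},\boldsymbol{0})$ is the $b$-symbol weight function on $\mathbb{F}_q^k$. A systematic encoding $\mathrm{Enc}(\boldsymbol{x})=(\boldsymbol{x},p(\boldsymbol{x}))\in\mathbb{F}_q^{k+r}$ is a function-correcting $b$-symbol code for $f$ if $d_b(\mathrm{Enc}(\boldsymbol{x}_1),\mathrm{Enc}(\boldsymbol{x}_2))\ge 2t+1$ whenever $f(\boldsymbol{x}_1)\ne f(\boldsymbol{x}_2)$; $r_b^f(k,t)$ is the smallest $r$ for which one exists. *)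

theory Defs
  imports Complex_Main
begin

text \<open>Vectors in F_q^n are lists of length n over a finite field type 'a.
  The b-symbol read of z at position i (indices mod n = length z).\<close>

definition bsym :: "nat \<Rightarrow> 'a list \<Rightarrow> nat \<Rightarrow> 'a list" where
  "bsym b z i = map (\<lambda>j. z ! ((i + j) mod length z)) [0..<b]"

definition db :: "nat \<Rightarrow> 'a list \<Rightarrow> 'a list \<Rightarrow> nat" where
  "db b z w = card {i. i < length z \<and> bsym b z i \<noteq> bsym b w i}"

definition wtb :: "nat \<Rightarrow> 'a::zero list \<Rightarrow> nat" where
  "wtb b x = db b x (replicate (length x) 0)"

text \<open>Systematic encoding Enc(x) = (x, p(x)) with p : F_q^k \<rightarrow> F_q^r is a
  function-correcting b-symbol code for f correcting t errors.\<close>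
definition fc_bsym_code ::
  "nat \<Rightarrow> nat \<Rightarrow> ('a list \<Rightarrow> 'c) \<Rightarrow> nat \<Rightarrow> nat \<Rightarrow> ('a list \<Rightarrow> 'a list) \<Rightarrow> bool" where
  "fc_bsym_code b t f k r p \<longleftrightarrow>
     (\<forall>x. length x = k \<longrightarrow> length (p x) = r) \<and>
     (\<forall>x1 x2. length x1 = k \<longrightarrow> length x2 = k \<longrightarrow> f x1 \<noteq> f x2 \<longrightarrow>
        2 * t + 1 \<le> db b (x1 @ p x1) (x2 @ p x2))"

definition rb :: "nat \<Rightarrow> ('a list \<Rightarrow> 'c) \<Rightarrow> nat \<Rightarrow> nat \<Rightarrow> nat" where
  "rb b f k t = (LEAST r. \<exists>p. fc_bsym_code b t f k r p)"

end

theory Submission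
  imports Defs "HOL-Analysis.Convex"
begin

(* Encode the messages x_i = 1^i 0^(k-i), i < M = t - b + 3. Their b-symbol weights are strictly
   increasing, so their codewords are pairwise at b-symbol distance at least 2t + 1; summing over
   all ordered pairs gives at least (2t + 1) M (M - 1). On the other hand, the windows lying inside
   the message part distinguish x_i from x_j at most |i - j| + b - 1 times, and each of the
   remaining r + b - 1 windows takes at most Q = q^b values, so by Cauchy-Schwarz it distinguishes
   at most M^2 (1 - 1/Q) ordered pairs. Comparing both counts, together with r + 2b - 1 >= 2t + 1
   from a single pair, gives the bound. For b > t the right-hand side is not positive. *)

lemma length_bsym [simp]: "length (bsym b z i) = b"
  by (simp add: bsym_def)

lemma bsym_eq_iff:
  "bsym b z i = bsym b w i \<longleftrightarrow> (\<forall>j<b. z ! ((i + j) mod length z) = w ! ((i + j) mod length w))"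
  by (simp add: bsym_def list_eq_iff_nth_eq)

lemma db_eq_sum_split:
  assumes "h \<le> length z"
  shows "real (db b z w) = (\<Sum>s<h. of_bool (bsym b z s \<noteq> bsym b w s))
                          + (\<Sum>s\<in>{h..<length z}. of_bool (bsym b z s \<noteq> bsym b w s))"
proof -
  have "real (db b z w) = (\<Sum>s<length z. of_bool (bsym b z s \<noteq> bsym b w s))"
    by (simp add: db_def Collect_conj_eq lessThan_def)
  also have "\<dots> = (\<Sum>s<h. of_bool (bsym b z s \<noteq> bsym b w s))
                 + (\<Sum>s\<in>{h..<length z}. of_bool (bsym b z s \<noteq> bsym b w s))"
    using assms by (simp add: atLeast0LessThan[symmetric] sum.atLeastLessThan_concat del: sum_of_bool_eq)
  finally show ?thesis .
qed

lemma hamming_le_db: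
  assumes "length w = length z" "0 < b"
  shows "card {i. i < length z \<and> z ! i \<noteq> w ! i} \<le> db b z w"
  unfolding db_def
proof (rule card_mono)
  show "{i. i < length z \<and> z ! i \<noteq> w ! i} \<subseteq> {i. i < length z \<and> bsym b z i \<noteq> bsym b w i}"
    using assms by (force simp: bsym_eq_iff)
qed simp

lemma card_windows_differ_le:
  assumes "h + b \<le> length z + 1" "length w = length z"
    and agree: "\<And>n. n + 1 < h + b \<Longrightarrow> n < lo \<or> hi \<le> n \<Longrightarrow> z ! n = w ! n"
  shows "card {s. s < h \<and> bsym b z s \<noteq> bsym b w s} \<le> hi + b - 1 - lo"
proof -
  have "{s. s < h \<and> bsym b z s \<noteq> bsym b w s} \<subseteq> {lo + 1 - b..<hi}"
  proof clarify
    fix s assume "s < h" "bsym b z s \<noteq> bsym b w s"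
    then obtain j where j: "j < b" "z ! ((s + j) mod length z) \<noteq> w ! ((s + j) mod length z)"
      using assms(2) by (auto simp: bsym_eq_iff)
    have "s + j < length z" "s + j + 1 < h + b"
      using \<open>s < h\<close> j(1) assms(1) by linarith+
    then have "lo \<le> s + j \<and> s + j < hi"
      using agree j(2) by fastforce
    then show "s \<in> {lo + 1 - b..<hi}"
      using j(1) by auto
  qed
  then have "card {s. s < h \<and> bsym b z s \<noteq> bsym b w s} \<le> card {lo + 1 - b..<hi}"
    by (intro card_mono) auto
  then show ?thesis
    by simp
qed

lemma sum_pairs_abs_diff:
  "(\<Sum>i<M. \<Sum>j<M. \<bar>real i - real j\<bar>) = real (M + 1) * real M * (real M - 1) / 3"
proof (induction M)
  case 0
  then show ?case by simp
next
  case (Suc M)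
  have "2 * (\<Sum>i<M. real i) = real M * (real M - 1)"
    using double_gauss_sum[of M, where 'a = real]
    by (simp add: atLeast0AtMost lessThan_Suc_atMost[symmetric] algebra_simps)
  then have last_row: "(\<Sum>i<M. \<bar>real i - real M\<bar>) = real M * (real M + 1) / 2"
    by (simp add: abs_if sum_subtractf algebra_simps)
  have "(\<Sum>i<Suc M. \<Sum>j<Suc M. \<bar>real i - real j\<bar>)
      = (\<Sum>i<M. \<Sum>j<M. \<bar>real i - real j\<bar>) + 2 * (\<Sum>i<M. \<bar>real i - real M\<bar>)"
    by (simp add: sum.distrib abs_minus_commute)
  then show ?case
    using Suc.IH last_row by (simp add: field_simps)
qed

lemma sum_pairs_of_bool_neq: "(\<Sum>i<M. \<Sum>j<M. of_bool (i \<noteq> j)) = real M * (real M - 1)"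
proof -
  have "(\<Sum>j<M. of_bool (i \<noteq> j)) = real M - 1" if "i < M" for i
  proof -
    have "{..<M} \<inter> {j. i \<noteq> j} = {..<M} - {i}"
      by auto
    then show ?thesis
      using that by simp
  qed
  then show ?thesis
    by simp
qed

lemma sum_pairs_ge_if_offdiag_ge:
  assumes "\<And>i j. i < M \<Longrightarrow> j < M \<Longrightarrow> i \<noteq> j \<Longrightarrow> d \<le> D i j"
  shows "real d * (real M * (real M - 1)) \<le> (\<Sum>i<M. \<Sum>j<M. real (D i j))"
proof -
  have "real d * (real M * (real M - 1)) = (\<Sum>i<M. \<Sum>j<M. of_bool (i \<noteq> j) * real d)"
    by (simp add: sum_pairs_of_bool_neq del: sum_of_bool_eq flip: sum_distrib_right)
  also have "\<dots> \<le> (\<Sum>i<M. \<Sum>j<M. real (D i j))"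
    using assms by (intro sum_mono) (auto simp: of_bool_def)
  finally show ?thesis .
qed

lemma sum_pairs_distinct_le:
  assumes "finite A" and range: "\<And>i. i < M \<Longrightarrow> g i \<in> A"
  shows "(\<Sum>i<M. \<Sum>j<M. of_bool (g i \<noteq> g j)) \<le> real M ^ 2 * (1 - 1 / real (card A))"
proof -
  define c where "c v = real (card {i. i < M \<and> g i = v})" for v
  have fibres: "(\<Sum>i<M. f i) = (\<Sum>v\<in>A. \<Sum>i | i \<in> {..<M} \<and> g i = v. f i)" for f :: "nat \<Rightarrow> real"
    by (rule sum.group[symmetric]) (use \<open>finite A\<close> range in auto)
  have "(\<Sum>i<M. \<Sum>j<M. of_bool (g i = g j)) = (\<Sum>i<M. c (g i))"
    by (simp add: c_def Collect_conj_eq lessThan_def eq_commute)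
  also have "\<dots> = (\<Sum>v\<in>A. c v ^ 2)"
    by (simp add: fibres c_def power2_eq_square)
  finally have coincidences: "(\<Sum>i<M. \<Sum>j<M. of_bool (g i = g j)) = (\<Sum>v\<in>A. c v ^ 2)" .
  have "real M = (\<Sum>v\<in>A. c v)"
    using fibres[of "\<lambda>_. 1"] by (simp add: c_def)
  then have "real M ^ 2 / real (card A) \<le> (\<Sum>v\<in>A. c v ^ 2)"
    using sum_squared_le_sum_of_squares[of c A]
    by (cases "card A = 0") (auto simp: divide_le_eq sum_nonneg)
  moreover have "(\<Sum>i<M. \<Sum>j<M. of_bool (g i \<noteq> g j))
      = real M ^ 2 - (\<Sum>i<M. \<Sum>j<M. of_bool (g i = g j))"
    by (simp add: of_bool_not_iff sum_subtractf power2_eq_square)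
  ultimately show ?thesis
    using coincidences by (simp add: algebra_simps)
qed

definition unary_word :: "nat \<Rightarrow> nat \<Rightarrow> 'a::zero_neq_one list" where
  "unary_word k i = map (\<lambda>n. if n < i then 1 else 0) [0..<k]"

lemma length_unary_word [simp]: "length (unary_word k i) = k"
  by (simp add: unary_word_def)

lemma nth_unary_word [simp]: "n < k \<Longrightarrow> unary_word k i ! n = (if n < i then 1 else 0)"
  by (simp add: unary_word_def)

lemma wtb_unary_word_less:
  assumes "i < j" "j + b \<le> k + 1" "0 < b"
  shows "wtb b (unary_word k i :: 'a::zero_neq_one list) < wtb b (unary_word k j :: 'a list)"
proof -
  define S where "S i = {s. s < k \<and> (\<exists>l<b. (s + l) mod k < i)}" for i
  have wtb_eq: "wtb b (unary_word k i' :: 'a list) = card (S i')" for i'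
    unfolding wtb_def db_def S_def
    by (auto simp: bsym_eq_iff split: if_splits intro!: arg_cong[where f = card])
  have "S i \<subseteq> S j"
    using assms(1) by (auto simp: S_def)
  moreover have "j - 1 \<in> S j - S i"
  proof -
    have "j - 1 + l < k" if "l < b" for l
      using that assms by linarith
    then show ?thesis
      using assms by (auto simp: S_def intro!: exI[of _ 0])
  qed
  ultimately have "card (S i) < card (S j)"
    by (intro psubset_card_mono) (auto simp: S_def)
  then show ?thesis
    by (simp add: wtb_eq)
qed

lemma db_unary_words_le:
  fixes u v :: "'a::zero_neq_one list" and b k r i j :: nat
  assumes "length u = r" "length v = r" "0 < b" "b \<le> k + 1"
  defines "z \<equiv> unary_word k i @ u" and "w \<equiv> unary_word k j @ v"
  shows "real (db b z w) \<le> \<bar>real i - real j\<bar> + of_bool (i \<noteq> j) * (real b - 1)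
           + (\<Sum>s\<in>{k + 1 - b..<k + r}. of_bool (bsym b z s \<noteq> bsym b w s))"
proof -
  have lengths: "length z = k + r" "length w = k + r"
    using assms(1,2) by (simp_all add: z_def w_def)
  have prefix: "z ! n = (if n < i then 1 else 0)" "w ! n = (if n < j then 1 else 0)" if "n < k" for n
    using that by (simp_all add: z_def w_def nth_append)
  have "real (card {s. s < k + 1 - b \<and> bsym b z s \<noteq> bsym b w s})
      \<le> \<bar>real i - real j\<bar> + of_bool (i \<noteq> j) * (real b - 1)"
  proof (cases "i = j")
    case True
    then have "{s. s < k + 1 - b \<and> bsym b z s \<noteq> bsym b w s} = {}"
      using assms(3,4) lengths prefix by (fastforce simp: bsym_eq_iff)
    with True show ?thesis
      by simp
  next
    case False
    have "card {s. s < k + 1 - b \<and> bsym b z s \<noteq> bsym b w s} \<le> max i j + b - 1 - min i j"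
      by (rule card_windows_differ_le) (use assms(3,4) lengths prefix in auto)
    then show ?thesis
      using False assms(3) by simp
  qed
  moreover have "(\<Sum>s<k + 1 - b. of_bool (bsym b z s \<noteq> bsym b w s))
      = real (card {s. s < k + 1 - b \<and> bsym b z s \<noteq> bsym b w s})"
    by (simp add: Int_def)
  ultimately show ?thesis
    using db_eq_sum_split[of "k + 1 - b" z b w] lengths assms(3,4) by simp
qed

lemma sum_pairs_db_unary_codewords_le:
  fixes u :: "nat \<Rightarrow> 'a::{finite,zero_neq_one} list"
  assumes "\<And>i. length (u i) = r" "0 < b" "b \<le> k + 1"
  shows "(\<Sum>i<M. \<Sum>j<M. real (db b (unary_word k i @ u i) (unary_word k j @ u j)))
    \<le> real (M + 1) * real M * (real M - 1) / 3 + real M * (real M - 1) * (real b - 1)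
      + real (r + b - 1) * real M ^ 2 * (1 - 1 / real (card (UNIV :: 'a set)) ^ b)"
proof -
  define X where "X i = unary_word k i @ u i" for i
  define T where "T = {k + 1 - b..<k + r}"
  define differ where "differ i j s = (of_bool (bsym b (X i) s \<noteq> bsym b (X j) s) :: real)" for i j s
  have "(\<Sum>i<M. \<Sum>j<M. real (db b (X i) (X j)))
      \<le> (\<Sum>i<M. \<Sum>j<M. \<bar>real i - real j\<bar> + of_bool (i \<noteq> j) * (real b - 1) + (\<Sum>s\<in>T. differ i j s))"
    unfolding X_def T_def differ_def by (intro sum_mono db_unary_words_le) (use assms in auto)
  also have "\<dots> = real (M + 1) * real M * (real M - 1) / 3 + real M * (real M - 1) * (real b - 1)
      + (\<Sum>i<M. \<Sum>j<M. \<Sum>s\<in>T. differ i j s)"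
    by (simp add: sum.distrib sum_pairs_abs_diff sum_pairs_of_bool_neq del: sum_of_bool_eq flip: sum_distrib_right)
  also have "(\<Sum>i<M. \<Sum>j<M. \<Sum>s\<in>T. differ i j s) = (\<Sum>s\<in>T. \<Sum>i<M. \<Sum>j<M. differ i j s)"
    by (simp add: sum.swap[where A = T])
  also have "\<dots> \<le> (\<Sum>s\<in>T. real M ^ 2 * (1 - 1 / real (card (UNIV :: 'a set)) ^ b))"
  proof (intro sum_mono)
    fix s
    have "finite {xs :: 'a list. length xs = b}"
      "card {xs :: 'a list. length xs = b} = card (UNIV :: 'a set) ^ b"
      using finite_lists_length_eq[of "UNIV :: 'a set" b] card_lists_length_eq[of "UNIV :: 'a set" b]
      by simp_all
    then show "(\<Sum>i<M. \<Sum>j<M. differ i j s) \<le> real M ^ 2 * (1 - 1 / real (card (UNIV :: 'a set)) ^ b)"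
      unfolding differ_def
      using sum_pairs_distinct_le[of "{xs :: 'a list. length xs = b}" M "\<lambda>i. bsym b (X i) s"]
      by (simp del: sum_of_bool_eq)
  qed
  also have "\<dots> = real (r + b - 1) * real M ^ 2 * (1 - 1 / real (card (UNIV :: 'a set)) ^ b)"
    using assms(2,3) by (simp add: T_def)
  finally show ?thesis
    by (simp add: X_def)
qed

lemma redundancy_bound_arith:
  fixes m b r Q :: real
  assumes pairs: "(2 * m + 2 * b - 1) * ((m + 2) * (m + 1))
      \<le> (m + 3) * (m + 2) * (m + 1) / 3 + (m + 2) * (m + 1) * (b - 1) + (r + b - 1) * (m + 2) ^ 2 * (1 - 1 / Q)"
    and Q: "1 < Q" and b: "1 \<le> b" and m: "1 \<le> m" and r: "2 * m \<le> r"
  shows "5 * Q * (m + 1) * m / (3 * (Q - 1) * (m + 2)) \<le> r"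
proof -
  have "(m + 2) * (3 * Q * (m + 1) * (2 * m + 2 * b - 1)) = 3 * Q * ((2 * m + 2 * b - 1) * ((m + 2) * (m + 1)))"
    by (simp add: algebra_simps)
  also have "\<dots> \<le> 3 * Q * ((m + 3) * (m + 2) * (m + 1) / 3 + (m + 2) * (m + 1) * (b - 1) + (r + b - 1) * (m + 2) ^ 2 * (1 - 1 / Q))"
    using pairs Q by (intro mult_left_mono) auto
  also have "\<dots> = (m + 2) * (Q * (m + 3) * (m + 1) + 3 * Q * (m + 1) * (b - 1) + 3 * (r + b - 1) * (m + 2) * (Q - 1))"
    using Q by (simp add: field_simps power2_eq_square)
  finally have "3 * Q * (m + 1) * (2 * m + 2 * b - 1)
      \<le> Q * (m + 3) * (m + 1) + 3 * Q * (m + 1) * (b - 1) + 3 * (r + b - 1) * (m + 2) * (Q - 1)"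
    by (rule mult_left_le_imp_le) (use m in linarith)
  moreover have "Q * (m + 1) * (5 * m + 3 * (b - 1))
      = 3 * Q * (m + 1) * (2 * m + 2 * b - 1) - Q * (m + 3) * (m + 1) - 3 * Q * (m + 1) * (b - 1)"
    by (simp add: algebra_simps)
  ultimately have reduced: "Q * (m + 1) * (5 * m + 3 * (b - 1)) \<le> 3 * (r + b - 1) * (m + 2) * (Q - 1)"
    by linarith
  (* reduced reads 5 Q m (m + 1) + 3 (b - 1) (Q (m + 1) - (Q - 1) (m + 2)) <= 3 r (Q - 1) (m + 2);
     the second summand has no fixed sign, and where it is negative r >= 2m suffices. *)
  have "5 * Q * (m + 1) * m \<le> r * (3 * (Q - 1) * (m + 2))"
  proof (cases "(Q - 1) * (m + 2) \<le> Q * (m + 1)")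
    case True
    then have "(b - 1) * ((Q - 1) * (m + 2)) \<le> (b - 1) * (Q * (m + 1))"
      using b by (intro mult_left_mono) auto
    then show ?thesis
      using reduced by (simp add: algebra_simps)
  next
    case False
    have "5 * Q * (m + 1) * m \<le> 3 * (2 * m) * (Q * (m + 1))"
      using Q m by (simp add: algebra_simps)
    also have "\<dots> \<le> 3 * r * (Q * (m + 1))"
      using Q m r by (intro mult_left_mono mult_right_mono) auto
    also have "\<dots> \<le> 3 * r * ((Q - 1) * (m + 2))"
      using False m r by (intro mult_left_mono) auto
    also have "\<dots> = r * (3 * (Q - 1) * (m + 2))"
      by (simp add: algebra_simps)
    finally show ?thesis .
  qed
  moreover have "0 < 3 * (Q - 1) * (m + 2)"
    using Q m by simp
  ultimately show ?thesis
    by (simp only: pos_divide_le_eq)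
qed

lemma two_le_card_UNIV: "2 \<le> card (UNIV :: 'a::{finite,zero_neq_one} set)"
proof -
  have "card {0, 1 :: 'a} \<le> card (UNIV :: 'a set)"
    by (rule card_mono) auto
  then show ?thesis
    by simp
qed

lemma wtb_unary_word_inj:
  assumes "i \<noteq> j" "i + b \<le> k + 1" "j + b \<le> k + 1" "0 < b"
  shows "wtb b (unary_word k i :: 'a::zero_neq_one list) \<noteq> wtb b (unary_word k j :: 'a list)"
  using assms wtb_unary_word_less[of i j b k, where 'a = 'a] wtb_unary_word_less[of j i b k, where 'a = 'a]
  by (cases "i < j") auto

lemma fc_bsym_code_wtb_unary_far:
  fixes p :: "'a::zero_neq_one list \<Rightarrow> 'a list"
  assumes "fc_bsym_code b t (wtb b) k r p" "i \<noteq> j" "i + b \<le> k + 1" "j + b \<le> k + 1" "0 < b"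
  shows "2 * t + 1 \<le> db b (unary_word k i @ p (unary_word k i)) (unary_word k j @ p (unary_word k j))"
  using assms(1) wtb_unary_word_inj[OF assms(2-5), where 'a = 'a] unfolding fc_bsym_code_def by simp

lemma fc_bsym_code_wtb_single_pair_bound:
  fixes p :: "'a::zero_neq_one list \<Rightarrow> 'a list"
  assumes code: "fc_bsym_code b t (wtb b) k r p" and "0 < b" "b \<le> k"
  shows "2 * t + 2 \<le> r + 2 * b"
proof -
  define X where "X i = unary_word k i @ p (unary_word k i)" for i
  have len_p: "length (p (unary_word k i)) = r" for i
    using code by (simp add: fc_bsym_code_def)
  have "real (2 * t + 1) \<le> real (db b (X 0) (X 1))"
    unfolding X_def using fc_bsym_code_wtb_unary_far[OF code, of 0 1] assms(2,3) by simp
  also have "\<dots> \<le> \<bar>real 0 - real 1\<bar> + of_bool (0 \<noteq> (1::nat)) * (real b - 1)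
      + (\<Sum>s\<in>{k + 1 - b..<k + r}. of_bool (bsym b (X 0) s \<noteq> bsym b (X 1) s))"
    unfolding X_def by (rule db_unary_words_le) (use len_p assms in auto)
  also have "\<dots> \<le> 1 + (real b - 1) + (\<Sum>s\<in>{k + 1 - b..<k + r}. 1)"
    by (intro add_mono sum_mono) auto
  also have "\<dots> = real (r + 2 * b - 1)"
    using assms by simp
  finally show ?thesis
    by linarith
qed

lemma fc_bsym_code_wtb_redundancy_ge:
  fixes p :: "'a::{finite,zero_neq_one} list \<Rightarrow> 'a list"
  assumes code: "fc_bsym_code b t (wtb b) k r p" and "0 < b" "b \<le> t" "t < k"
  shows "5 * real (card (UNIV :: 'a set)) ^ b * (real t - real b + 2) * (real t - real b + 1)
      / (3 * (real (card (UNIV :: 'a set)) ^ b - 1) * (real t - real b + 3)) \<le> real r"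
proof -
  define M where "M = t - b + 3"
  define X where "X i = unary_word k i @ p (unary_word k i)" for i
  define Q where "Q = real (card (UNIV :: 'a set)) ^ b"
  define m where "m = real t - real b + 1"
  have "real (2 * t + 1) * (real M * (real M - 1)) \<le> (\<Sum>i<M. \<Sum>j<M. real (db b (X i) (X j)))"
    unfolding X_def using assms
    by (intro sum_pairs_ge_if_offdiag_ge fc_bsym_code_wtb_unary_far) (auto simp: M_def)
  also have "\<dots> \<le> real (M + 1) * real M * (real M - 1) / 3 + real M * (real M - 1) * (real b - 1)
      + real (r + b - 1) * real M ^ 2 * (1 - 1 / Q)"
    unfolding X_def Q_def
    by (rule sum_pairs_db_unary_codewords_le) (use code assms in \<open>auto simp: fc_bsym_code_def\<close>)
  finally have pairs: "real (2 * t + 1) * (real M * (real M - 1))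
      \<le> real (M + 1) * real M * (real M - 1) / 3 + real M * (real M - 1) * (real b - 1)
        + real (r + b - 1) * real M ^ 2 * (1 - 1 / Q)" .
  have "real (M + 1) = m + 3" "real M = m + 2" "m + 2 - 1 = m + 1"
    "real (2 * t + 1) = 2 * m + 2 * real b - 1" "real (r + b - 1) = real r + real b - 1"
    using assms by (simp_all add: M_def m_def)
  from pairs[unfolded this] have "5 * Q * (m + 1) * m / (3 * (Q - 1) * (m + 2)) \<le> r"
  proof (rule redundancy_bound_arith)
    show "1 < Q"
      using two_le_card_UNIV[where 'a = 'a] assms(2) unfolding Q_def
      by (intro one_less_power) auto
    show "2 * m \<le> real r"
      using fc_bsym_code_wtb_single_pair_bound[OF code] assms unfolding m_def by simp
  qed (use assms in \<open>auto simp: m_def\<close>)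
  moreover have "real t - real b + 2 = m + 1" "real t - real b + 1 = m" "real t - real b + 3 = m + 2"
    by (simp_all add: m_def)
  ultimately show ?thesis
    by (simp only: Q_def)
qed

lemma wtb_le_length: "wtb b x \<le> length x"
proof -
  have "wtb b x \<le> card {..<length x}"
    unfolding wtb_def db_def by (rule card_mono) auto
  then show ?thesis
    by simp
qed

(* Some code has to exist: otherwise rb, a LEAST over an empty set, would be a junk value. *)
definition repeated_unit_vector :: "nat \<Rightarrow> nat \<Rightarrow> nat \<Rightarrow> 'a::zero_neq_one list" where
  "repeated_unit_vector n c v = map (\<lambda>i. if i div c = v then 1 else 0) [0..<(n + 1) * c]"

lemma length_repeated_unit_vector [simp]: "length (repeated_unit_vector n c v) = (n + 1) * c"
  by (simp add: repeated_unit_vector_def)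

lemma repeated_unit_vectors_differ:
  fixes x y :: "'a::zero_neq_one list" and n c v w :: nat
  assumes "length y = length x" "v \<le> n" "v \<noteq> w"
  defines "z1 \<equiv> x @ repeated_unit_vector n c v" and "z2 \<equiv> y @ repeated_unit_vector n c w"
  shows "c \<le> card {i. i < length z1 \<and> z1 ! i \<noteq> z2 ! i}"
proof -
  have "{length x + v * c..<length x + v * c + c} \<subseteq> {i. i < length z1 \<and> z1 ! i \<noteq> z2 ! i}"
  proof
    fix i
    assume "i \<in> {length x + v * c..<length x + v * c + c}"
    then obtain d where i: "i = length x + (v * c + d)" and "d < c"
      by (intro that[of "i - length x - v * c"]) auto
    have "v * c + c \<le> (n + 1) * c"
      using \<open>v \<le> n\<close> by (simp add: mult_right_mono)
    then have "v * c + d < (n + 1) * c"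
      using \<open>d < c\<close> by linarith
    moreover have "(v * c + d) div c = v"
      using \<open>d < c\<close> by simp
    ultimately have "repeated_unit_vector n c v ! (v * c + d) = (1 :: 'a)"
      "repeated_unit_vector n c w ! (v * c + d) = (0 :: 'a)"
      using \<open>v \<noteq> w\<close> by (simp_all add: repeated_unit_vector_def)
    moreover have "z1 ! i = repeated_unit_vector n c v ! (v * c + d)"
      "z2 ! i = repeated_unit_vector n c w ! (v * c + d)"
      using i assms(1) by (simp_all add: z1_def z2_def nth_append)
    moreover have "i < length z1"
      using i \<open>v * c + d < (n + 1) * c\<close> by (simp add: z1_def)
    ultimately show "i \<in> {i. i < length z1 \<and> z1 ! i \<noteq> z2 ! i}"
      by simp
  qed
  then have "card {length x + v * c..<length x + v * c + c} \<le> card {i. i < length z1 \<and> z1 ! i \<noteq> z2 ! i}"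
    by (rule card_mono[rotated]) simp
  then show ?thesis
    by simp
qed

lemma fc_bsym_code_repeated_unit_vector:
  assumes "0 < b" and range: "\<And>x. length x = k \<Longrightarrow> f x \<le> n"
  shows "fc_bsym_code b t f k ((n + 1) * (2 * t + 1))
           (\<lambda>x. repeated_unit_vector n (2 * t + 1) (f x) :: 'a::zero_neq_one list)"
  unfolding fc_bsym_code_def
proof (intro conjI allI impI)
  fix x1 x2 :: "'a list"
  assume "length x1 = k" "length x2 = k" "f x1 \<noteq> f x2"
  then have "2 * t + 1 \<le> card {i. i < length (x1 @ repeated_unit_vector n (2 * t + 1) (f x1))
      \<and> (x1 @ repeated_unit_vector n (2 * t + 1) (f x1)) ! i \<noteq> (x2 @ repeated_unit_vector n (2 * t + 1) (f x2)) ! i}"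
    by (intro repeated_unit_vectors_differ range) simp_all
  also have "\<dots> \<le> db b (x1 @ repeated_unit_vector n (2 * t + 1) (f x1)) (x2 @ repeated_unit_vector n (2 * t + 1) (f x2))"
    using \<open>length x1 = k\<close> \<open>length x2 = k\<close> \<open>0 < b\<close> by (intro hamming_le_db) simp_all
  finally show "2 * t + 1 \<le> db b (x1 @ repeated_unit_vector n (2 * t + 1) (f x1))
                               (x2 @ repeated_unit_vector n (2 * t + 1) (f x2))" .
qed simp

lemma rb_attained:
  assumes "fc_bsym_code b t f k r p"
  shows "\<exists>p. fc_bsym_code b t f k (rb b f k t) p"
  unfolding rb_def by (rule LeastI_ex) (use assms in blast)

lemma redundancy_bound_nonpos:
  fixes Q :: real
  assumes "1 \<le> Q" "t < b"
  shows "5 * Q * (real t - real b + 2) * (real t - real b + 1) / (3 * (Q - 1) * (real t - real b + 3)) \<le> 0"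
proof (cases "b = t + 1 \<or> b = t + 2")
  case True
  then show ?thesis
    by auto
next
  case False
  with assms(2) have "real t - real b + 3 \<le> 0"
    by linarith
  moreover have "0 \<le> (real t - real b + 2) * (real t - real b + 1)"
    using False assms(2) by (intro mult_nonpos_nonpos) linarith+
  ultimately show ?thesis
    using assms(1) by (intro divide_nonneg_nonpos) (simp_all add: mult_nonneg_nonpos mult.assoc)
qed

theorem mainTheorem17:
  fixes b k t :: nat
  assumes "0 < b" and "0 < t" and "t < k"
  shows "real (rb b (wtb b :: 'a::{finite,field} list \<Rightarrow> nat) k t)
    \<ge> 5 * real (card (UNIV :: 'a set)) ^ b * (real t - real b + 2) * (real t - real b + 1)
       / (3 * (real (card (UNIV :: 'a set)) ^ b - 1) * (real t - real b + 3))"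
proof (cases "b \<le> t")
  case True
  have "fc_bsym_code b t (wtb b) k ((k + 1) * (2 * t + 1))
      (\<lambda>x. repeated_unit_vector k (2 * t + 1) (wtb b x) :: 'a list)"
    by (rule fc_bsym_code_repeated_unit_vector[OF assms(1)]) (metis wtb_le_length)
  from rb_attained[OF this] obtain p :: "'a list \<Rightarrow> 'a list"
    where "fc_bsym_code b t (wtb b) k (rb b (wtb b :: 'a list \<Rightarrow> nat) k t) p" ..
  from fc_bsym_code_wtb_redundancy_ge[OF this assms(1) True assms(3)] show ?thesis .
next
  case False
  have "1 \<le> real (card (UNIV :: 'a set)) ^ b"
    using two_le_card_UNIV[where 'a = 'a] by simp
  with False have "5 * real (card (UNIV :: 'a set)) ^ b * (real t - real b + 2) * (real t - real b + 1)
       / (3 * (real (card (UNIV :: 'a set)) ^ b - 1) * (real t - real b + 3)) \<le> 0"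
    by (intro redundancy_bound_nonpos) simp_all
  then show ?thesis
    by (rule order_trans) simp
qed

end
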